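(* Let $\mathcal X$ and $\mathcal Y$ be countable spaces, each endowed with the discrete metric. If $\{\mu_n\}_{n\in\mathbb N}\subset\wp(\mathcal X\times\mathcal Y)$ converges to $\mu$ in the weak-* topology, then $\mu_n\to\mu$ in $\wp_I(\mathcal X\times\mathcal Y)$.
   Context: For a Polish space $\mathcal S$, $\wp(\mathcal S)$ denotes the Borel probability measures and $\wp_w(\mathcal S)$ this set with the weak-* topology (weakest topology making $\mu\mapsto\int g\,d\mu$ continuous for all bounded continuous $g$). For $\mu\in\wp(\mathcal X\times\mathcal Y)$, $\mu^{\mathcal X}$ is the marginal and $\mu(\cdot\mid x)$ a regular conditional distribution on $\mathcal Y$ given $x$. Let $\psi(\mu)\in\wp(\mathcal X\times\wp_w(\mathcal Y))$ be $\psi(\mu)(dx,d\zeta)=\delta_{\mu(\cdot\mid x)}(d\zeta)\mu^{\mathcal X}(dx)$. The topology of information on $\wp(\mathcal X\times\mathcal Y)$ is the coarsest topology making $\psi$ continuous into $\wp_w(\mathcal X\times\wp_w(\mathcal Y))$; $\wp_I(\mathcal X\times\mathcal Y)$ denotes $\wp(\mathcal X\times\mathcal Y)$ with it. *)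

theory Defs
  imports "HOL-Analysis.Analysis" "HOL-Probability.Probability"
begin

text \<open>Probability measures on a discrete countable space are represented as pmfs.
  Bounded continuous real functions on a topological space T:\<close>
definition bounded_continuous_funs :: "'a topology \<Rightarrow> ('a \<Rightarrow> real) set" where
  "bounded_continuous_funs T =
     {g. continuous_map T euclideanreal g \<and> bounded (g ` topspace T)}"

definition weak_star_topology :: "'a topology \<Rightarrow> 'a pmf topology" where
  "weak_star_topology T =
     pullback_topology UNIV
       (\<lambda>p. \<lambda>g\<in>bounded_continuous_funs T. measure_pmf.expectation p g)
       (product_topology (\<lambda>_. euclideanreal) (bounded_continuous_funs T))"

text \<open>Regular conditional distribution of the second coordinate given the first
  (relevant only for x in the support of the first marginal).\<close>
definition cond_dist :: "('x \<times> 'y) pmf \<Rightarrow> 'x \<Rightarrow> 'y pmf" where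
  "cond_dist \<mu> x = map_pmf snd (cond_pmf \<mu> {z. fst z = x})"

definition psi :: "('x \<times> 'y) pmf \<Rightarrow> ('x \<times> 'y pmf) pmf" where
  "psi \<mu> = map_pmf (\<lambda>x. (x, cond_dist \<mu> x)) (map_pmf fst \<mu>)"

definition information_topology :: "('x \<times> 'y) pmf topology" where
  "information_topology =
     pullback_topology UNIV psi
       (weak_star_topology
          (prod_topology (discrete_topology UNIV)
                         (weak_star_topology (discrete_topology UNIV))))"

end

theory Submission
  imports Defs
begin

text \<open>On a countable discrete space every bounded function is continuous, so weak-* convergence
  \<open>\<mu>\<^sub>n \<rightarrow> \<mu>\<close> means convergence of the expectations of all bounded functions. For an \<open>x\<close> charged
  by \<open>\<mu>\<close>, the conditional expectation of a bounded \<open>g\<close> given \<open>x\<close> is the ratio of the expectations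
  of \<open>1\<^sub>{x} g\<close> and \<open>1\<^sub>{x}\<close>, so \<open>\<mu>\<^sub>n(\<cdot>|x) \<rightarrow> \<mu>(\<cdot>|x)\<close> weakly. For a bounded continuous \<open>G\<close> on
  \<open>X \<times> \<wp>(Y)\<close>, the expectation of \<open>G\<close> under \<open>\<psi>(\<mu>\<^sub>n)\<close> is that of \<open>a\<^sub>n(x,y) = G(x, \<mu>\<^sub>n(\<cdot>|x))\<close> under
  \<open>\<mu>\<^sub>n\<close>. The \<open>a\<^sub>n\<close> are uniformly bounded and converge pointwise on the support of \<open>\<mu>\<close> to
  \<open>h(x,y) = G(x, \<mu>(\<cdot>|x))\<close>; since \<open>\<mu>\<close> is concentrated up to \<open>\<epsilon>\<close> on a finite set whose
  complement the \<open>\<mu>\<^sub>n\<close> eventually charge by less than \<open>2\<epsilon>\<close>, the expectation of \<open>|a\<^sub>n - h|\<close> under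
  \<open>\<mu>\<^sub>n\<close> tends to 0, while that of \<open>h\<close> tends to its expectation under \<open>\<mu>\<close>.\<close>

lemma limitin_pullback_topology_UNIV:
  "limitin (pullback_topology UNIV f T) xs x F \<longleftrightarrow> limitin T (\<lambda>n. f (xs n)) (f x) F"
  unfolding limitin_def openin_pullback_topology topspace_pullback_topology
  by auto

lemma limitin_weak_star_topology:
  "limitin (weak_star_topology T) ps p F \<longleftrightarrow>
   (\<forall>g\<in>bounded_continuous_funs T.
      ((\<lambda>n. measure_pmf.expectation (ps n) g) \<longlongrightarrow> measure_pmf.expectation p g) F)"
  unfolding weak_star_topology_def limitin_pullback_topology_UNIV limitin_componentwise
  by (simp add: PiE_iff)

lemma topspace_weak_star_topology [simp]: "topspace (weak_star_topology T) = UNIV"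
  unfolding weak_star_topology_def topspace_pullback_topology by (auto simp: PiE_iff)

lemma bounded_continuous_funs_discrete:
  "bounded_continuous_funs (discrete_topology UNIV) = {g. bounded (range g)}"
  unfolding bounded_continuous_funs_def by simp

lemma limitin_weak_star_discrete:
  "limitin (weak_star_topology (discrete_topology UNIV)) ps p F \<longleftrightarrow>
   (\<forall>g :: 'a \<Rightarrow> real. bounded (range g) \<longrightarrow>
      ((\<lambda>n. measure_pmf.expectation (ps n) g) \<longlongrightarrow> measure_pmf.expectation p g) F)"
  unfolding limitin_weak_star_topology bounded_continuous_funs_discrete by auto

lemma bounded_range_indicator: "bounded (range (indicator A :: 'a \<Rightarrow> real))"
  by (rule bounded_subset[OF finite_imp_bounded[of "{0,1}"]]) (auto simp: indicator_def)

lemma limitin_weak_star_discrete_measure: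
  assumes "limitin (weak_star_topology (discrete_topology UNIV)) ps p F"
  shows "((\<lambda>n. measure (ps n) A) \<longlongrightarrow> measure p A) F"
  using assms bounded_range_indicator[of A] unfolding limitin_weak_star_discrete by force

lemma measure_pmf_integrable_bounded:
  fixes f :: "'a \<Rightarrow> real"
  assumes "\<And>x. \<bar>f x\<bar> \<le> B"
  shows "integrable (measure_pmf p) f"
  using assms by (intro measure_pmf.integrable_const_bound[where B=B]) auto

lemma expectation_cond_pmf:
  fixes f :: "'a \<Rightarrow> real"
  assumes "set_pmf p \<inter> s \<noteq> {}"
  shows "measure_pmf.expectation (cond_pmf p s) f =
         measure_pmf.expectation p (\<lambda>x. indicator s x * f x) / measure p s"
proof -
  have pos: "measure p s > 0" using assms by (auto intro: measure_pmf_posI)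
  have "measure_pmf (cond_pmf p s) = density p (\<lambda>x. ennreal (indicator s x / measure p s))"
    unfolding cond_pmf.rep_eq[OF assms] uniform_measure_def
    using pos by (intro arg_cong[where f="density _"] ext)
       (simp add: measure_pmf.emeasure_eq_measure indicator_def divide_ennreal[of 1, symmetric])
  then have "measure_pmf.expectation (cond_pmf p s) f =
     measure_pmf.expectation p (\<lambda>x. (indicator s x / measure p s) *\<^sub>R f x)"
    by (simp add: integral_density)
  also have "\<dots> = measure_pmf.expectation p (\<lambda>x. indicator s x * f x) / measure p s"
    by (simp add: field_simps)
  finally show ?thesis .
qed

lemma expectation_cond_dist:
  fixes g :: "'y \<Rightarrow> real" and q :: "('x \<times> 'y) pmf"
  assumes "measure q {z. fst z = x} > 0"
  shows "measure_pmf.expectation (cond_dist q x) g =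
    measure_pmf.expectation q (\<lambda>z. indicator {z. fst z = x} z * g (snd z)) / measure q {z. fst z = x}"
proof -
  have "set_pmf q \<inter> {z. fst z = x} \<noteq> {}"
    using assms measure_pmf_zero_iff[of q "{z. fst z = x}"] by auto
  then show ?thesis unfolding cond_dist_def by (simp add: expectation_cond_pmf)
qed

lemma expectation_psi:
  fixes G :: "'x \<times> 'y pmf \<Rightarrow> real"
  shows "measure_pmf.expectation (psi q) G = measure_pmf.expectation q (\<lambda>z. G (fst z, cond_dist q (fst z)))"
  unfolding psi_def map_pmf_comp by simp

lemma pmf_finite_subset_measure_Compl_less:
  fixes p :: "'a::countable pmf"
  assumes "e > 0"
  obtains F where "finite F" "F \<subseteq> set_pmf p" "measure p (- F) < e"
proof -
  define A where "A k = - {z \<in> set_pmf p. to_nat z < k}" for k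
  have "(\<lambda>k. measure p (A k)) \<longlonglongrightarrow> measure p (\<Inter>k. A k)"
    by (rule measure_pmf.finite_Lim_measure_decseq) (auto simp: A_def decseq_def)
  moreover have "(\<Inter>k. A k) = - set_pmf p"
    unfolding A_def by auto
  moreover have "measure p (- set_pmf p) = 0"
    by (simp add: measure_pmf_zero_iff)
  ultimately have "(\<lambda>k. measure p (A k)) \<longlonglongrightarrow> 0"
    by simp
  then have "eventually (\<lambda>k. measure p (A k) < e) sequentially"
    using assms by (auto intro: order_tendstoD)
  then obtain k where "measure p (A k) < e"
    by (auto simp: eventually_sequentially)
  moreover have "finite {z \<in> set_pmf p. to_nat z < k}"
    by (rule finite_subset[of _ "to_nat -` {..<k}"]) (auto intro: finite_vimageI)
  ultimately show ?thesis using that unfolding A_def by blast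
qed

lemma expectation_le_sum_plus_measure_Compl:
  fixes d :: "'a \<Rightarrow> real"
  assumes "finite F" and d_nonneg: "\<And>z. 0 \<le> d z" and d_le: "\<And>z. d z \<le> C"
  shows "measure_pmf.expectation q d \<le> (\<Sum>w\<in>F. d w) + C * measure q (- F)"
proof -
  define S where "S = (\<Sum>w\<in>F. d w)"
  have "S \<ge> 0" unfolding S_def by (intro sum_nonneg d_nonneg)
  have "C \<ge> 0" using d_nonneg d_le order_trans by blast
  have pointwise: "d z \<le> S + C * indicator (- F) z" for z
  proof (cases "z \<in> F")
    case True
    then show ?thesis unfolding S_def using \<open>finite F\<close> d_nonneg by (simp add: member_le_sum)
  next
    case False
    then show ?thesis using d_le[of z] \<open>S \<ge> 0\<close> by simp
  qed
  have "integrable q d"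
    using d_nonneg d_le by (intro measure_pmf_integrable_bounded[where B=C]) (simp add: abs_le_iff)
  moreover have "integrable q (\<lambda>z. C * indicator (- F) z)"
    using \<open>C \<ge> 0\<close> by (intro measure_pmf_integrable_bounded[where B=C]) (simp add: indicator_def)
  ultimately have "measure_pmf.expectation q d \<le> measure_pmf.expectation q (\<lambda>z. S + C * indicator (- F) z)"
    using pointwise by (intro integral_mono) auto
  also have "\<dots> = S + C * measure q (- F)"
    using \<open>integrable q (\<lambda>z. C * indicator (- F) z)\<close> by simp
  finally show ?thesis unfolding S_def .
qed

lemma tendsto_expectation_zero_if_tendsto_zero_on_support:
  fixes ps :: "nat \<Rightarrow> 'a::countable pmf" and d :: "nat \<Rightarrow> 'a \<Rightarrow> real"
  assumes lim: "limitin (weak_star_topology (discrete_topology UNIV)) ps p sequentially"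
    and d_nonneg: "\<And>n z. 0 \<le> d n z" and d_le: "\<And>n z. d n z \<le> C"
    and d_lim: "\<And>z. z \<in> set_pmf p \<Longrightarrow> ((\<lambda>n. d n z) \<longlongrightarrow> 0) sequentially"
  shows "((\<lambda>n. measure_pmf.expectation (ps n) (d n)) \<longlongrightarrow> 0) sequentially"
proof (rule tendstoI)
  fix e :: real assume "e > 0"
  have "C \<ge> 0" using d_nonneg d_le order_trans by blast
  define \<eta> where "\<eta> = e / (4 * (C + 1))"
  have "\<eta> > 0" and C\<eta>: "C * (2 * \<eta>) \<le> e / 2"
    unfolding \<eta>_def using \<open>C \<ge> 0\<close> \<open>e > 0\<close> by (simp_all add: field_simps)
  obtain F where F: "finite F" "F \<subseteq> set_pmf p" "measure p (- F) < \<eta>"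
    using pmf_finite_subset_measure_Compl_less[OF \<open>\<eta> > 0\<close>] by blast
  have "eventually (\<lambda>n. measure (ps n) (- F) < 2 * \<eta>) sequentially"
    using limitin_weak_star_discrete_measure[OF lim] F(3) \<open>\<eta> > 0\<close> by (intro order_tendstoD) auto
  moreover have "((\<lambda>n. \<Sum>w\<in>F. d n w) \<longlongrightarrow> (\<Sum>w\<in>F. 0)) sequentially"
    using F(2) by (intro tendsto_sum d_lim) auto
  then have "eventually (\<lambda>n. (\<Sum>w\<in>F. d n w) < e / 2) sequentially"
    using \<open>e > 0\<close> by (intro order_tendstoD) auto
  ultimately show "eventually (\<lambda>n. dist (measure_pmf.expectation (ps n) (d n)) 0 < e) sequentially"
  proof eventually_elim
    case (elim n)
    have "measure_pmf.expectation (ps n) (d n) \<le> (\<Sum>w\<in>F. d n w) + C * measure (ps n) (- F)"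
      using F(1) d_nonneg d_le by (rule expectation_le_sum_plus_measure_Compl)
    also have "\<dots> < e / 2 + C * (2 * \<eta>)"
      using elim \<open>C \<ge> 0\<close> by (intro add_less_le_mono mult_left_mono) auto
    finally have "measure_pmf.expectation (ps n) (d n) < e" using C\<eta> by linarith
    moreover have "measure_pmf.expectation (ps n) (d n) \<ge> 0"
      by (intro integral_nonneg_AE) (simp add: d_nonneg)
    ultimately show ?case by simp
  qed
qed

lemma tendsto_expectation_if_tendsto_on_support:
  fixes ps :: "nat \<Rightarrow> 'a::countable pmf" and a :: "nat \<Rightarrow> 'a \<Rightarrow> real"
  assumes lim: "limitin (weak_star_topology (discrete_topology UNIV)) ps p sequentially"
    and a_bound: "\<And>n z. \<bar>a n z\<bar> \<le> B" and h_bound: "\<And>z. \<bar>h z\<bar> \<le> B"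
    and a_lim: "\<And>z. z \<in> set_pmf p \<Longrightarrow> ((\<lambda>n. a n z) \<longlongrightarrow> h z) sequentially"
  shows "((\<lambda>n. measure_pmf.expectation (ps n) (a n)) \<longlongrightarrow> measure_pmf.expectation p h) sequentially"
proof -
  define d where "d n z = \<bar>a n z - h z\<bar>" for n z
  have gap: "\<bar>measure_pmf.expectation (ps n) (a n) - measure_pmf.expectation (ps n) h\<bar>
        \<le> measure_pmf.expectation (ps n) (d n)" for n
  proof -
    have "integrable (ps n) (a n)" "integrable (ps n) h"
      using a_bound h_bound by (auto intro: measure_pmf_integrable_bounded)
    then have "measure_pmf.expectation (ps n) (a n) - measure_pmf.expectation (ps n) h
          = measure_pmf.expectation (ps n) (\<lambda>z. a n z - h z)"
      by simp
    also have "\<bar>\<dots>\<bar> \<le> measure_pmf.expectation (ps n) (d n)"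
      using integral_norm_bound[of "measure_pmf (ps n)" "\<lambda>z. a n z - h z"]
      unfolding d_def by simp
    finally show ?thesis .
  qed
  have "((\<lambda>n. measure_pmf.expectation (ps n) (d n)) \<longlongrightarrow> 0) sequentially"
  proof (rule tendsto_expectation_zero_if_tendsto_zero_on_support[OF lim, where C="2 * B"])
    show "d n z \<le> 2 * B" for n z
      unfolding d_def using a_bound[of n z] h_bound[of z] by linarith
    show "((\<lambda>n. d n z) \<longlongrightarrow> 0) sequentially" if "z \<in> set_pmf p" for z
      using tendsto_rabs_zero[OF LIM_zero[OF a_lim[OF that]]] unfolding d_def .
  qed (simp add: d_def)
  then have "((\<lambda>n. measure_pmf.expectation (ps n) (a n) - measure_pmf.expectation (ps n) h)
      \<longlongrightarrow> 0) sequentially"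
    by (rule Lim_null_comparison[rotated]) (simp add: gap)
  moreover have "((\<lambda>n. measure_pmf.expectation (ps n) h) \<longlongrightarrow> measure_pmf.expectation p h) sequentially"
    using lim h_bound unfolding limitin_weak_star_discrete bounded_real by blast
  ultimately show ?thesis
    using tendsto_add by fastforce
qed

lemma limitin_cond_dist:
  fixes ps :: "nat \<Rightarrow> ('x \<times> 'y) pmf"
  assumes lim: "limitin (weak_star_topology (discrete_topology UNIV)) ps p F"
    and pos: "measure p {z. fst z = x} > 0"
  shows "limitin (weak_star_topology (discrete_topology UNIV))
           (\<lambda>n. cond_dist (ps n) x) (cond_dist p x) F"
  unfolding limitin_weak_star_discrete
proof (intro allI impI)
  fix g :: "'y \<Rightarrow> real" assume "bounded (range g)"
  define A where "A = {z :: 'x \<times> 'y. fst z = x}"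
  define f where "f = (\<lambda>z. indicator A z * g (snd z))"
  have mlim: "((\<lambda>n. measure (ps n) A) \<longlongrightarrow> measure p A) F"
    using lim by (rule limitin_weak_star_discrete_measure)
  obtain M where M: "\<And>y. \<bar>g y\<bar> \<le> M"
    using \<open>bounded (range g)\<close> unfolding bounded_real by auto
  then have "\<bar>f z\<bar> \<le> M" for z
    unfolding f_def by (auto simp: indicator_def intro: order_trans[OF abs_ge_zero M])
  then have "((\<lambda>n. measure_pmf.expectation (ps n) f / measure (ps n) A)
      \<longlongrightarrow> measure_pmf.expectation p f / measure p A) F"
    using lim pos mlim unfolding limitin_weak_star_discrete bounded_real A_def
    by (intro tendsto_divide) auto
  moreover have "eventually (\<lambda>n. measure_pmf.expectation (ps n) f / measure (ps n) A =
      measure_pmf.expectation (cond_dist (ps n) x) g) F"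
    using order_tendstoD(1)[OF mlim pos[folded A_def]]
    by eventually_elim (simp add: A_def f_def expectation_cond_dist)
  ultimately show "((\<lambda>n. measure_pmf.expectation (cond_dist (ps n) x) g) \<longlongrightarrow>
      measure_pmf.expectation (cond_dist p x) g) F"
    using pos by (simp add: A_def f_def expectation_cond_dist tendsto_cong)
qed

theorem theorem5:
  fixes \<mu>s :: "nat \<Rightarrow> ('x::countable \<times> 'y::countable) pmf"
    and \<mu> :: "('x \<times> 'y) pmf"
  assumes "limitin (weak_star_topology (discrete_topology UNIV)) \<mu>s \<mu> sequentially"
  shows "limitin information_topology \<mu>s \<mu> sequentially"
  unfolding information_topology_def limitin_pullback_topology_UNIV limitin_weak_star_topology expectation_psi
proof
  fix G :: "'x \<times> 'y pmf \<Rightarrow> real"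
  assume "G \<in> bounded_continuous_funs
      (prod_topology (discrete_topology UNIV) (weak_star_topology (discrete_topology UNIV)))"
  then obtain B where B: "\<And>w. \<bar>G w\<bar> \<le> B"
    and G_cont: "continuous_map (prod_topology (discrete_topology UNIV)
                   (weak_star_topology (discrete_topology UNIV))) euclideanreal G"
    unfolding bounded_continuous_funs_def bounded_real by auto
  have "((\<lambda>n. G (fst z, cond_dist (\<mu>s n) (fst z))) \<longlongrightarrow> G (fst z, cond_dist \<mu> (fst z))) sequentially"
    if "z \<in> set_pmf \<mu>" for z
  proof -
    have "measure \<mu> {w. fst w = fst z} > 0"
      using that by (auto intro: measure_pmf_posI)
    with assms have "limitin (weak_star_topology (discrete_topology UNIV))
        (\<lambda>n. cond_dist (\<mu>s n) (fst z)) (cond_dist \<mu> (fst z)) sequentially"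
      by (intro limitin_cond_dist) auto
    moreover have G_section: "continuous_map (weak_star_topology (discrete_topology UNIV)) euclideanreal
        (\<lambda>q. G (fst z, q))"
      using continuous_map_compose[OF continuous_map_pairedI[OF continuous_map_const[THEN iffD2] continuous_map_id] G_cont]
      by (simp add: o_def)
    ultimately show ?thesis
      using continuous_map_limit[OF G_section] by (simp add: o_def)
  qed
  with assms B show "((\<lambda>n. measure_pmf.expectation (\<mu>s n) (\<lambda>z. G (fst z, cond_dist (\<mu>s n) (fst z))))
      \<longlongrightarrow> measure_pmf.expectation \<mu> (\<lambda>z. G (fst z, cond_dist \<mu> (fst z)))) sequentially"
    by (intro tendsto_expectation_if_tendsto_on_support[where B=B]) auto
qed

end
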